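(* Let $m,n,u\in\mathbb{R}$ and let $(G_3,g,J)$ be the three-dimensional Lorentzian Lie group described in the context. Write $\mathbb{V}_{RC}$ for the real vector space of left-invariant Ricci collineations $\xi=\lambda_1\overline{e}_1+\lambda_2\overline{e}_2+\lambda_3\overline{e}_3$ ($\lambda_i\in\mathbb{R}$ constants) associated to the Yano connection. Then: (1) if $mnu=0$, every left-invariant vector field is a left-invariant Ricci collineation, i.e. $\mathbb{V}_{RC}=\langle\overline{e}_1,\overline{e}_2,\overline{e}_3\rangle$; (2) if $mnu\neq0$, then $\mathbb{V}_{RC}=\langle\overline{e}_3\rangle$.
   Context: $G_3$ is a connected three-dimensional Lie group whose Lie algebra has a basis $\{\overline{e}_1,\overline{e}_2,\overline{e}_3\}$ (left-invariant vector fields) with $[\overline{e}_1,\overline{e}_2]=-u\overline{e}_3$, $[\overline{e}_1,\overline{e}_3]=-n\overline{e}_2$, $[\overline{e}_2,\overline{e}_3]=m\overline{e}_1$. The metric $g$ is the left-invariant Lorentzian metric with $g(\overline{e}_1,\overline{e}_1)=g(\overline{e}_2,\overline{e}_2)=1$, $g(\overline{e}_3,\overline{e}_3)=-1$, $g(\overline{e}_i,\overline{e}_j)=0$ for $i\neq j$. $J$ is the left-invariant product structure with $J\overline{e}_1=\overline{e}_1$, $J\overline{e}_2=\overline{e}_2$, $J\overline{e}_3=-\overline{e}_3$. With $\nabla^{LC}$ the Levi-Civita connection of $g$, the Yano connection is $\nabla^{*}_XY=\nabla^{LC}_XY-\frac12(\nabla^{LC}_YJ)JX-\frac14[(\nabla^{LC}_XJ)JY-(\nabla^{LC}_{JX}J)Y]$;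 its curvature is $R^{*}(X,Y)Z=\nabla^{*}_X\nabla^{*}_YZ-\nabla^{*}_Y\nabla^{*}_XZ-\nabla^{*}_{[X,Y]}Z$; its Ricci tensor is $\mathrm{Ric}^{*}(X,Y)=-g(R^{*}(X,\overline{e}_1)Y,\overline{e}_1)-g(R^{*}(X,\overline{e}_2)Y,\overline{e}_2)+g(R^{*}(X,\overline{e}_3)Y,\overline{e}_3)$; and $\overline{\mathrm{Ric}^{*}}(X,Y)=\frac12(\mathrm{Ric}^{*}(X,Y)+\mathrm{Ric}^{*}(Y,X))$. For a left-invariant vector field $\xi$, $(\mathrm{L}_{\xi}\overline{\mathrm{Ric}^{*}})(X,Y)=\xi(\overline{\mathrm{Ric}^{*}}(X,Y))-\overline{\mathrm{Ric}^{*}}([\xi,X],Y)-\overline{\mathrm{Ric}^{*}}(X,[\xi,Y])$; $\xi$ is a left-invariant Ricci collineation if $\mathrm{L}_{\xi}\overline{\mathrm{Ric}^{*}}=0$. *)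

theory Defs
  imports "HOL-Analysis.Analysis"
begin

text \<open>Left-invariant vector fields on G_3 are identified with their coefficient
vectors (l1,l2,l3) in real^3 w.r.t. the frame e1,e2,e3 (indices 1,2,3 of type 3).\<close>

type_synonym vf = "real ^ 3"

definition ebar :: "3 \<Rightarrow> vf" where "ebar k = axis k 1"

text \<open>Lie bracket: [e1,e2] = -u e3, [e1,e3] = -n e2, [e2,e3] = m e1, extended bilinearly.\<close>
definition brk :: "real \<Rightarrow> real \<Rightarrow> real \<Rightarrow> vf \<Rightarrow> vf \<Rightarrow> vf" where
  "brk m n u X Y = (\<chi> k. if k = 1 then m * (X$2 * Y$3 - X$3 * Y$2)
                     else if k = 2 then - n * (X$1 * Y$3 - X$3 * Y$1)
                     else - u * (X$1 * Y$2 - X$2 * Y$1))"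

definition gL :: "vf \<Rightarrow> vf \<Rightarrow> real" where
  "gL X Y = X$1 * Y$1 + X$2 * Y$2 - X$3 * Y$3"

definition Jst :: "vf \<Rightarrow> vf" where
  "Jst X = (\<chi> k. if k = 3 then - X$k else X$k)"

text \<open>Levi-Civita connection on left-invariant fields via the Koszul formula
 2 g(\<nabla>_X Y, Z) = g([X,Y],Z) - g([Y,Z],X) + g([Z,X],Y).\<close>
definition LC :: "real \<Rightarrow> real \<Rightarrow> real \<Rightarrow> vf \<Rightarrow> vf \<Rightarrow> vf" where
  "LC m n u X Y = (\<Sum>k\<in>UNIV. (gL (ebar k) (ebar k) *
      ((gL (brk m n u X Y) (ebar k) - gL (brk m n u Y (ebar k)) X
        + gL (brk m n u (ebar k) X) Y) / 2)) *\<^sub>R ebar k)"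

definition nablaJ :: "real \<Rightarrow> real \<Rightarrow> real \<Rightarrow> vf \<Rightarrow> vf \<Rightarrow> vf" where
  "nablaJ m n u X Y = LC m n u X (Jst Y) - Jst (LC m n u X Y)"

definition Yano :: "real \<Rightarrow> real \<Rightarrow> real \<Rightarrow> vf \<Rightarrow> vf \<Rightarrow> vf" where
  "Yano m n u X Y = LC m n u X Y - (1/2) *\<^sub>R nablaJ m n u Y (Jst X)
     - (1/4) *\<^sub>R (nablaJ m n u X (Jst Y) - nablaJ m n u (Jst X) Y)"

definition RY :: "real \<Rightarrow> real \<Rightarrow> real \<Rightarrow> vf \<Rightarrow> vf \<Rightarrow> vf \<Rightarrow> vf" where
  "RY m n u X Y Z = Yano m n u X (Yano m n u Y Z) - Yano m n u Y (Yano m n u X Z)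
     - Yano m n u (brk m n u X Y) Z"

definition RicY :: "real \<Rightarrow> real \<Rightarrow> real \<Rightarrow> vf \<Rightarrow> vf \<Rightarrow> real" where
  "RicY m n u X Y = - gL (RY m n u X (ebar 1) Y) (ebar 1)
     - gL (RY m n u X (ebar 2) Y) (ebar 2) + gL (RY m n u X (ebar 3) Y) (ebar 3)"

definition RicYsym :: "real \<Rightarrow> real \<Rightarrow> real \<Rightarrow> vf \<Rightarrow> vf \<Rightarrow> real" where
  "RicYsym m n u X Y = (RicY m n u X Y + RicY m n u Y X) / 2"

text \<open>Lie derivative of the symmetrized Ricci tensor along a left-invariant \<xi>,
 evaluated on left-invariant X, Y. The term \<xi>(Ric(X,Y)) vanishes since
 Ric(X,Y) is constant for left-invariant X, Y.\<close>
definition LieRic :: "real \<Rightarrow> real \<Rightarrow> real \<Rightarrow> vf \<Rightarrow> vf \<Rightarrow> vf \<Rightarrow> real" where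
  "LieRic m n u \<xi> X Y = 0 - RicYsym m n u (brk m n u \<xi> X) Y - RicYsym m n u X (brk m n u \<xi> Y)"

definition ricci_collineation :: "real \<Rightarrow> real \<Rightarrow> real \<Rightarrow> vf \<Rightarrow> bool" where
  "ricci_collineation m n u \<xi> \<longleftrightarrow> (\<forall>X Y. LieRic m n u \<xi> X Y = 0)"

definition V_RC :: "real \<Rightarrow> real \<Rightarrow> real \<Rightarrow> vf set" where
  "V_RC m n u = {\<xi>. ricci_collineation m n u \<xi>}"

end

theory Submission
  imports Defs
begin

text \<open>In the frame \<open>e\<^sub>1, e\<^sub>2, e\<^sub>3\<close> the Yano connection reduces to
  \<open>\<nabla>\<^sup>*\<^sub>X Y = (-m X\<^sub>3 Y\<^sub>2, n X\<^sub>3 Y\<^sub>1, u (X\<^sub>2 Y\<^sub>1 - X\<^sub>1 Y\<^sub>2))\<close>, and its symmetrized Ricci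
  tensor is diagonal with entries \<open>-nu, -mu, 0\<close>. Feeding this into the Lie derivative,
  the \<open>\<xi>\<^sub>3\<close>-terms cancel and
  \<open>(L\<^sub>\<xi> Ric)(X,Y) = mnu (\<xi>\<^sub>2 (X\<^sub>1 Y\<^sub>3 + X\<^sub>3 Y\<^sub>1) - \<xi>\<^sub>1 (X\<^sub>2 Y\<^sub>3 + X\<^sub>3 Y\<^sub>2))\<close>.
  Hence \<open>\<xi>\<close> is a Ricci collineation iff \<open>mnu = 0\<close> or \<open>\<xi>\<^sub>1 = \<xi>\<^sub>2 = 0\<close>.\<close>

lemma ebar_nth [simp]: "ebar k $ j = (if j = k then 1 else 0)"
  by (simp add: ebar_def axis_def)

lemma brk_nth [simp]:
  "brk m n u X Y $ 1 = m * (X$2 * Y$3 - X$3 * Y$2)"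
  "brk m n u X Y $ 2 = - n * (X$1 * Y$3 - X$3 * Y$1)"
  "brk m n u X Y $ 3 = - u * (X$1 * Y$2 - X$2 * Y$1)"
  by (simp_all add: brk_def)

lemma Jst_nth [simp]: "Jst X $ 1 = X$1" "Jst X $ 2 = X$2" "Jst X $ 3 = - X$3"
  by (simp_all add: Jst_def)

lemma LC_nth [simp]:
  "LC m n u X Y $ 1 = (m - n + u) / 2 * X$2 * Y$3 - (m + n - u) / 2 * X$3 * Y$2"
  "LC m n u X Y $ 2 = (m - n - u) / 2 * X$1 * Y$3 + (m + n - u) / 2 * X$3 * Y$1"
  "LC m n u X Y $ 3 = (m - n - u) / 2 * X$1 * Y$2 + (m - n + u) / 2 * X$2 * Y$1"
  by (simp_all add: LC_def sum_3 gL_def field_simps)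

lemma Yano_nth [simp]:
  "Yano m n u X Y $ 1 = - m * X$3 * Y$2"
  "Yano m n u X Y $ 2 = n * X$3 * Y$1"
  "Yano m n u X Y $ 3 = u * (X$2 * Y$1 - X$1 * Y$2)"
  by (simp_all add: Yano_def nablaJ_def field_simps)

lemma RicYsym_eq: "RicYsym m n u X Y = - n * u * X$1 * Y$1 - m * u * X$2 * Y$2"
  by (simp add: RicYsym_def RicY_def RY_def gL_def field_simps)

lemma LieRic_eq:
  "LieRic m n u \<xi> X Y =
     m * n * u * (\<xi>$2 * (X$1 * Y$3 + X$3 * Y$1) - \<xi>$1 * (X$2 * Y$3 + X$3 * Y$2))"
  by (simp add: LieRic_def RicYsym_eq algebra_simps)

lemma ricci_collineation_iff:
  "ricci_collineation m n u \<xi> \<longleftrightarrow> m * n * u = 0 \<or> (\<xi>$1 = 0 \<and> \<xi>$2 = 0)"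
proof
  assume rc: "ricci_collineation m n u \<xi>"
  have "m * n * u * \<xi>$2 = 0"
    using rc[unfolded ricci_collineation_def, rule_format, of "ebar 1" "ebar 3"]
    by (simp add: LieRic_eq)
  moreover have "m * n * u * \<xi>$1 = 0"
    using rc[unfolded ricci_collineation_def, rule_format, of "ebar 2" "ebar 3"]
    by (simp add: LieRic_eq)
  ultimately show "m * n * u = 0 \<or> (\<xi>$1 = 0 \<and> \<xi>$2 = 0)"
    by auto
qed (auto simp: ricci_collineation_def LieRic_eq)

lemma ebar_eq_Basis: "{ebar 1, ebar 2, ebar 3} = (Basis :: vf set)"
  by (auto simp: Basis_vec_def ebar_def) (metis exhaust_3)

lemma span_ebar3: "span {ebar 3} = {\<xi>. \<xi>$1 = 0 \<and> \<xi>$2 = 0}"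
proof
  show "{\<xi>. \<xi>$1 = 0 \<and> \<xi>$2 = 0} \<subseteq> span {ebar 3}"
  proof
    fix \<xi> :: vf
    assume "\<xi> \<in> {\<xi>. \<xi>$1 = 0 \<and> \<xi>$2 = 0}"
    then have "\<xi> = \<xi>$3 *\<^sub>R ebar 3"
      by (auto simp: vec_eq_iff forall_3)
    then show "\<xi> \<in> span {ebar 3}"
      by (metis span_base span_scale insertI1)
  qed
qed (auto simp: span_singleton)

theorem theorem3p9:
  fixes m n u :: real
  shows "(m * n * u = 0 \<longrightarrow> V_RC m n u = span {ebar 1, ebar 2, ebar 3})
       \<and> (m * n * u \<noteq> 0 \<longrightarrow> V_RC m n u = span {ebar 3})"
  unfolding V_RC_def ricci_collineation_iff ebar_eq_Basis span_Basis span_ebar3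
  by auto

end
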